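(* Let $S$ be a finite set of states, $B\subseteq S$ a set of accepting states, and $P_\pi : S\times S\to[0,1]$ the (row-stochastic) transition matrix of the Markov chain induced on $S$ by a fixed memoryless policy $\pi$. Fix discount factors $0<\gamma_B<\gamma\le 1$ and define the surrogate reward $R(s)=1-\gamma_B$ and discount $\Gamma(s)=\gamma_B$ for $s\in B$, and $R(s)=0$, $\Gamma(s)=\gamma$ for $s\notin B$. For a path $\sigma=s_0s_1s_2\cdots$ of the chain let $G_t(\sigma)=\lim_{K\to\infty}\sum_{i=0}^{K}R(\sigma[t+i])\prod_{j=0}^{i-1}\Gamma(\sigma[t+j])$, and let $V(s)=\mathbb{E}[G_t(\sigma)\mid \sigma[t]=s]$ be the value function. Define iterates $U_{(k)}\in\mathbb{R}^S$ by $U_{(0)}=0$ and $$U_{(k+1)}(s)=R(s)+\Gamma(s)\sum_{s'\in S}P_\pi(s,s')\,U_{(k)}(s'),\qquad s\in S .$$ Then $U_{(k)}$ converges to $V$, and: (i) if $\gamma<1$, then $\|U_{(k)}-V\|_\infty\le \gamma^k\|V\|_\infty$ for all $k\ge 0$; (ii) if $\gamma=1$, then $\|U_{(k)}-V\|_\infty\le \big(1-(1-\gamma_B)\varepsilon^{n'}\big)^{\lfloor k/(n'+1)\rfloor}\|V\|_\infty$ for all $k\ge 0$, where $\varepsilon>0$ is any number with $P_\pi(s,s')\ge\varepsilon$ for all pairs $(s,s')$ with $P_\pi(s,s')>0$, and $n'=|\neg B_{T,A}|$ is the number of states that are not in $B$ and do not belong to any rejecting bottom strongly connected component.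
   Context: A strongly connected component (communicating class) of a finite Markov chain is a maximal set of states that all communicate with each other; a bottom strongly connected component (BSCC) is one with no transitions leaving it. A BSCC is called rejecting if it contains no state of $B$, and accepting otherwise. Let $\neg B_R$ denote the set of all states lying in rejecting BSCCs of the chain with transition matrix $P_\pi$, and $\neg B_{T,A}=S\setminus(B\cup\neg B_R)$. The setting arises from a Markov decision process with Büchi objective (visit $B$ infinitely often) under a fixed memoryless policy $\pi$, with $P_\pi(s,s')=P(s,\pi(s),s')$. *)

theory Defs
  imports Complex_Main
begin

definition stochastic :: "('s::finite \<Rightarrow> 's \<Rightarrow> real) \<Rightarrow> bool" where
  "stochastic P \<longleftrightarrow> (\<forall>s s'. 0 \<le> P s s' \<and> P s s' \<le> 1) \<and> (\<forall>s. (\<Sum>s'\<in>UNIV. P s s') = 1)"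

definition rew :: "'s set \<Rightarrow> real \<Rightarrow> 's \<Rightarrow> real" where
  "rew B gB s = (if s \<in> B then 1 - gB else 0)"

definition disc :: "'s set \<Rightarrow> real \<Rightarrow> real \<Rightarrow> 's \<Rightarrow> real" where
  "disc B gB g s = (if s \<in> B then gB else g)"

definition ret_trunc :: "'s set \<Rightarrow> real \<Rightarrow> real \<Rightarrow> nat \<Rightarrow> 's list \<Rightarrow> real" where
  "ret_trunc B gB g K w =
     (\<Sum>i\<le>K. rew B gB (w ! i) * (\<Prod>j<i. disc B gB g (w ! j)))"

definition path_prob :: "('s \<Rightarrow> 's \<Rightarrow> real) \<Rightarrow> 's list \<Rightarrow> real" where
  "path_prob P w = (\<Prod>j<length w - 1. P (w ! j) (w ! Suc j))"

text \<open>Expected truncated return E[G^K | sigma_0 = s]: the truncated return depends only on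
  the first K+1 states, so its expectation is the sum over all paths of length K+1 from s.\<close>
definition exp_ret_trunc :: "('s::finite \<Rightarrow> 's \<Rightarrow> real) \<Rightarrow> 's set \<Rightarrow> real \<Rightarrow> real \<Rightarrow> nat \<Rightarrow> 's \<Rightarrow> real" where
  "exp_ret_trunc P B gB g K s =
     (\<Sum>xs\<in>{xs. length xs = K}. path_prob P (s # xs) * ret_trunc B gB g K (s # xs))"

text \<open>Value function V(s) = E[G | sigma_0 = s] = lim_K E[G^K | sigma_0 = s]
  (monotone convergence: the truncated returns are nonnegative and increasing in K).\<close>
definition value_fun :: "('s::finite \<Rightarrow> 's \<Rightarrow> real) \<Rightarrow> 's set \<Rightarrow> real \<Rightarrow> real \<Rightarrow> 's \<Rightarrow> real" where
  "value_fun P B gB g s = lim (\<lambda>K. exp_ret_trunc P B gB g K s)"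

fun U_iter :: "('s::finite \<Rightarrow> 's \<Rightarrow> real) \<Rightarrow> 's set \<Rightarrow> real \<Rightarrow> real \<Rightarrow> nat \<Rightarrow> 's \<Rightarrow> real" where
  "U_iter P B gB g 0 s = 0"
| "U_iter P B gB g (Suc k) s =
     rew B gB s + disc B gB g s * (\<Sum>s'\<in>UNIV. P s s' * U_iter P B gB g k s')"

definition sup_norm :: "('s::finite \<Rightarrow> real) \<Rightarrow> real" where
  "sup_norm f = Max (range (\<lambda>s. \<bar>f s\<bar>))"

definition edges :: "('s \<Rightarrow> 's \<Rightarrow> real) \<Rightarrow> ('s \<times> 's) set" where
  "edges P = {(s, s'). P s s' > 0}"

definition is_scc :: "('s \<Rightarrow> 's \<Rightarrow> real) \<Rightarrow> 's set \<Rightarrow> bool" where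
  "is_scc P C \<longleftrightarrow> C \<noteq> {} \<and>
     (\<forall>x\<in>C. \<forall>y\<in>C. (x, y) \<in> (edges P)\<^sup>*) \<and>
     (\<forall>x\<in>C. \<forall>y. (x, y) \<in> (edges P)\<^sup>* \<and> (y, x) \<in> (edges P)\<^sup>* \<longrightarrow> y \<in> C)"

definition is_bscc :: "('s \<Rightarrow> 's \<Rightarrow> real) \<Rightarrow> 's set \<Rightarrow> bool" where
  "is_bscc P C \<longleftrightarrow> is_scc P C \<and> (\<forall>x\<in>C. \<forall>y. (x, y) \<in> edges P \<longrightarrow> y \<in> C)"

definition rej_bscc_states :: "('s \<Rightarrow> 's \<Rightarrow> real) \<Rightarrow> 's set \<Rightarrow> 's set" where
  "rej_bscc_states P B = \<Union>{C. is_bscc P C \<and> C \<inter> B = {}}"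

definition notB_TA :: "('s \<Rightarrow> 's \<Rightarrow> real) \<Rightarrow> 's set \<Rightarrow> 's set" where
  "notB_TA P B = UNIV - (B \<union> rej_bscc_states P B)"

end

theory Submission
  imports Defs
begin

text \<open>Unrolling the first step of a path shows that the expected return truncated at horizon K
  is exactly the iterate U_(K+1). The iterates increase to V, and the error e_k = V - U_(k)
  satisfies e_(k+1)(s) = Gamma(s) * sum_s' P(s,s') e_k(s'), so it contracts by gamma in every step.
  For gamma = 1 the error vanishes on rejecting BSCCs and is damped by gamma_B on B, while every
  other state reaches B or a rejecting BSCC within n' steps along edges of probability at least
  epsilon; hence every block of n' + 1 iterations shrinks the error by 1 - (1 - gamma_B) epsilon^n'.\<close>

lemma path_prob_Cons_Cons: "path_prob P (s # t # w) = P s t * path_prob P (t # w)"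
  unfolding path_prob_def by (simp del: prod.lessThan_Suc add: prod.lessThan_Suc_shift)

lemma ret_trunc_Cons:
  "ret_trunc B gB g (Suc K) (s # w) = rew B gB s + disc B gB g s * ret_trunc B gB g K w"
  unfolding ret_trunc_def
  by (simp del: sum.atMost_Suc prod.lessThan_Suc
      add: sum.atMost_Suc_shift prod.lessThan_Suc_shift sum_distrib_left mult_ac)

lemma sum_lists_length_Suc:
  "(\<Sum>xs\<in>{xs. length xs = Suc K}. f xs) =
     (\<Sum>t\<in>(UNIV::'a::finite set). \<Sum>xs\<in>{xs. length xs = K}. f (t # xs))"
proof -
  have lists: "{xs. length xs = Suc K} = (\<lambda>(t, xs). t # xs) ` (UNIV \<times> {xs::'a list. length xs = K})"
    by (auto simp: image_iff length_Suc_conv)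
  have "inj_on (\<lambda>(t, xs). t # xs) (UNIV \<times> {xs::'a list. length xs = K})"
    by (auto simp: inj_on_def)
  then show ?thesis
    unfolding lists by (simp add: sum.reindex sum.cartesian_product split_def)
qed

lemma stochastic_nonneg: "stochastic P \<Longrightarrow> 0 \<le> P s t"
  by (simp add: stochastic_def)

lemma stochastic_row_sum: "stochastic P \<Longrightarrow> (\<Sum>t\<in>UNIV. P s t) = 1"
  by (simp add: stochastic_def)

lemma stochastic_avg_le:
  assumes "stochastic P" and "\<And>t. f t \<le> M"
  shows "(\<Sum>t\<in>UNIV. P s t * f t) \<le> M"
proof -
  have "(\<Sum>t\<in>UNIV. P s t * f t) \<le> (\<Sum>t\<in>UNIV. P s t * M)"
    by (intro sum_mono mult_left_mono assms stochastic_nonneg)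
  also have "\<dots> = M"
    using assms(1) by (simp add: sum_distrib_right[symmetric] stochastic_row_sum)
  finally show ?thesis .
qed

lemma stochastic_avg_nonneg:
  assumes "stochastic P" and "\<And>t. 0 \<le> f t"
  shows "0 \<le> (\<Sum>t\<in>UNIV. P s t * f t)"
  by (intro sum_nonneg mult_nonneg_nonneg assms stochastic_nonneg)

lemma stochastic_avg_le_dip:
  assumes "stochastic P" and "\<And>u. f u \<le> M" and "f t \<le> M - d" and "0 \<le> d" and "\<epsilon> \<le> P s t"
  shows "(\<Sum>u\<in>UNIV. P s u * f u) \<le> M - \<epsilon> * d"
proof -
  have "(\<Sum>u\<in>UNIV. P s u * f u) \<le> (\<Sum>u\<in>UNIV. P s u * (M - (if u = t then d else 0)))"
    using assms(2,3) by (intro sum_mono mult_left_mono stochastic_nonneg[OF assms(1)]) auto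
  also have "\<dots> = M - P s t * d"
    using assms(1)
    by (simp add: right_diff_distrib sum_subtractf sum_distrib_right[symmetric] stochastic_row_sum
        if_distrib[of "\<lambda>x. P s _ * x"] cong: if_cong)
  also have "\<dots> \<le> M - \<epsilon> * d"
    using assms(4,5) by (simp add: mult_right_mono)
  finally show ?thesis .
qed

lemma stochastic_min_positive_le_1:
  assumes "stochastic P" and "\<forall>s t. 0 < P s t \<longrightarrow> \<epsilon> \<le> P s t"
  shows "\<epsilon> \<le> 1"
proof -
  fix s
  obtain t where "P s t \<noteq> 0"
    using stochastic_row_sum[OF assms(1), of s] by (metis sum.neutral zero_neq_one)
  then have "0 < P s t" using stochastic_nonneg[OF assms(1), of s t] by linarith
  moreover have "P s t \<le> 1" using assms(1) by (simp add: stochastic_def)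
  ultimately show ?thesis using assms(2) by force
qed

lemma sum_path_prob_eq_1:
  assumes "stochastic P"
  shows "(\<Sum>xs\<in>{xs. length xs = K}. path_prob P (s # xs)) = 1"
proof (induction K arbitrary: s)
  case 0
  then show ?case by (simp add: path_prob_def)
next
  case (Suc K)
  have "(\<Sum>xs\<in>{xs. length xs = Suc K}. path_prob P (s # xs))
      = (\<Sum>t\<in>UNIV. P s t * (\<Sum>xs\<in>{xs. length xs = K}. path_prob P (t # xs)))"
    by (simp add: sum_lists_length_Suc path_prob_Cons_Cons sum_distrib_left)
  also have "\<dots> = 1" using assms by (simp add: Suc stochastic_row_sum)
  finally show ?case .
qed

lemma exp_ret_trunc_eq_U_iter:
  assumes "stochastic P"
  shows "exp_ret_trunc P B gB g K s = U_iter P B gB g (Suc K) s"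
proof (induction K arbitrary: s)
  case 0
  then show ?case by (simp add: exp_ret_trunc_def path_prob_def ret_trunc_def)
next
  case (Suc K)
  let ?paths = "{xs. length xs = K}"
  have "exp_ret_trunc P B gB g (Suc K) s
     = (\<Sum>t\<in>UNIV. \<Sum>xs\<in>?paths. P s t * path_prob P (t # xs) *
          (rew B gB s + disc B gB g s * ret_trunc B gB g K (t # xs)))"
    unfolding exp_ret_trunc_def by (simp add: sum_lists_length_Suc path_prob_Cons_Cons ret_trunc_Cons)
  also have "\<dots> = (\<Sum>t\<in>UNIV. P s t * (rew B gB s * (\<Sum>xs\<in>?paths. path_prob P (t # xs))
         + disc B gB g s * exp_ret_trunc P B gB g K t))"
    unfolding exp_ret_trunc_def by (simp add: algebra_simps sum_distrib_left sum.distrib)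
  also have "\<dots> = rew B gB s * (\<Sum>t\<in>UNIV. P s t)
      + disc B gB g s * (\<Sum>t\<in>UNIV. P s t * U_iter P B gB g (Suc K) t)"
    by (simp add: sum_path_prob_eq_1[OF assms] Suc algebra_simps sum_distrib_left sum.distrib)
  also have "\<dots> = U_iter P B gB g (Suc (Suc K)) s"
    using assms by (simp add: stochastic_row_sum)
  finally show ?case .
qed

lemma abs_le_sup_norm: "\<bar>f s\<bar> \<le> sup_norm f"
  unfolding sup_norm_def by (rule Max_ge) auto

lemma sup_norm_le: "(\<And>s. \<bar>f s\<bar> \<le> X) \<Longrightarrow> sup_norm f \<le> X"
  unfolding sup_norm_def by (subst Max_le_iff) auto

lemma rtrancl_edges_closed:
  assumes "edges P `` C \<subseteq> C" and "(x, y) \<in> (edges P)\<^sup>*" and "x \<in> C"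
  shows "y \<in> C"
  using assms(2,3) by (induction rule: rtrancl_induct) (use assms(1) in auto)

text \<open>By minimality, every state reachable from a state of \<open>C\<close> with the fewest reachable states
  reaches back to it, so its reachable set is a BSCC.\<close>
lemma closed_set_contains_bscc:
  assumes "finite C" and "C \<noteq> {}" and closed: "edges P `` C \<subseteq> C"
  obtains D where "is_bscc P D" and "D \<subseteq> C"
proof -
  define reach where "reach x = (edges P)\<^sup>* `` {x}" for x
  have reach_sub: "reach x \<subseteq> C" if "x \<in> C" for x
    using rtrancl_edges_closed[OF closed _ that] unfolding reach_def by blast
  obtain s where sC: "s \<in> C" and smin: "\<And>t. t \<in> C \<Longrightarrow> card (reach s) \<le> card (reach t)"
    using ex_has_least_nat[of "\<lambda>x. x \<in> C" _ "\<lambda>x. card (reach x)"] assms(2) by blast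
  have reach_eq: "reach t = reach s" if "t \<in> reach s" for t
  proof -
    have sub: "reach t \<subseteq> reach s"
      using that unfolding reach_def by (auto intro: rtrancl_trans)
    have "t \<in> C" using that reach_sub[OF sC] by blast
    then have "card (reach s) \<le> card (reach t)" by (rule smin)
    then show ?thesis
      using card_seteq[OF finite_subset[OF reach_sub[OF sC] assms(1)] sub] by blast
  qed
  have "s \<in> reach s" unfolding reach_def by simp
  moreover have "(x, y) \<in> (edges P)\<^sup>*" if "x \<in> reach s" "y \<in> reach s" for x y
    using that reach_eq[of x] unfolding reach_def by blast
  moreover have "y \<in> reach s" if "x \<in> reach s" "(x, y) \<in> (edges P)\<^sup>*" for x y
    using that reach_eq[of x] unfolding reach_def by blast
  ultimately have "is_bscc P (reach s)"
    unfolding is_bscc_def is_scc_def by (blast intro: r_into_rtrancl)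
  then show ?thesis using reach_sub[OF sC] by (rule that)
qed

lemma closed_set_meets_accepting_or_rej_bscc:
  fixes P :: "'s::finite \<Rightarrow> 's \<Rightarrow> real"
  assumes "C \<noteq> {}" and "edges P `` C \<subseteq> C"
  shows "C \<inter> (B \<union> rej_bscc_states P B) \<noteq> {}"
proof
  assume disjoint: "C \<inter> (B \<union> rej_bscc_states P B) = {}"
  obtain D where D: "is_bscc P D" "D \<subseteq> C"
    using closed_set_contains_bscc[OF finite assms] .
  then have "D \<subseteq> rej_bscc_states P B"
    using disjoint unfolding rej_bscc_states_def by blast
  moreover have "D \<noteq> {}" using D(1) by (simp add: is_bscc_def is_scc_def)
  ultimately show False using D(2) disjoint by blast
qed

fun can_reach_within :: "('s \<Rightarrow> 's \<Rightarrow> real) \<Rightarrow> 's set \<Rightarrow> nat \<Rightarrow> 's set" where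
  "can_reach_within P A 0 = A"
| "can_reach_within P A (Suc j) =
     can_reach_within P A j \<union> {s. \<exists>t\<in>can_reach_within P A j. 0 < P s t}"

lemma can_reach_within_mono: "i \<le> j \<Longrightarrow> can_reach_within P A i \<subseteq> can_reach_within P A j"
  by (rule lift_Suc_mono_le[of "can_reach_within P A"]) auto

text \<open>As long as the complement of \<open>can_reach_within P A j\<close> is nonempty it is not closed, so the
  sets grow strictly until they exhaust the states.\<close>
lemma can_reach_within_eq_UNIV:
  fixes P :: "'s::finite \<Rightarrow> 's \<Rightarrow> real"
  assumes meets: "\<And>C. C \<noteq> {} \<Longrightarrow> edges P `` C \<subseteq> C \<Longrightarrow> C \<inter> A \<noteq> {}"
  shows "can_reach_within P A (card (- A)) = UNIV"
proof -
  let ?G = "can_reach_within P A"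
  have grows: "?G j \<subset> ?G (Suc j)" if "?G j \<noteq> UNIV" for j
  proof -
    have "- ?G j \<inter> A = {}" using can_reach_within_mono[of 0 j P A] by auto
    then have "\<not> edges P `` (- ?G j) \<subseteq> - ?G j"
      using meets[of "- ?G j"] that by blast
    then have "?G (Suc j) \<noteq> ?G j" by (auto simp: edges_def)
    then show ?thesis using can_reach_within_mono[of j "Suc j" P A] by auto
  qed
  have "?G j = UNIV \<or> card A + j \<le> card (?G j)" for j
  proof (induction j)
    case (Suc j)
    show ?case
    proof (cases "?G j = UNIV")
      case True
      then show ?thesis using can_reach_within_mono[of j "Suc j" P A] by auto
    next
      case False
      then have "card (?G j) < card (?G (Suc j))"
        using grows[of j] by (simp add: psubset_card_mono)
      with Suc False show ?thesis by linarith
    qed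
  qed simp
  moreover have "card A + card (- A) = card (UNIV :: 's set)"
    by (metis Compl_eq_Diff_UNIV card_Diff_subset card_mono finite le_add_diff_inverse subset_UNIV)
  ultimately show ?thesis
    by (metis card_seteq finite subset_UNIV)
qed

lemma can_reach_accepting_or_rej_bscc:
  fixes P :: "'s::finite \<Rightarrow> 's \<Rightarrow> real"
  shows "can_reach_within P (B \<union> rej_bscc_states P B) (card (notB_TA P B)) = UNIV"
proof -
  have "notB_TA P B = - (B \<union> rej_bscc_states P B)"
    unfolding notB_TA_def by blast
  then show ?thesis
    using can_reach_within_eq_UNIV closed_set_meets_accepting_or_rej_bscc by metis
qed

lemma rej_bscc_states_closed:
  "s \<in> rej_bscc_states P B \<Longrightarrow> 0 < P s t \<Longrightarrow> t \<in> rej_bscc_states P B"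
  unfolding rej_bscc_states_def is_bscc_def edges_def by blast

lemma rej_bscc_states_not_accepting: "s \<in> rej_bscc_states P B \<Longrightarrow> s \<notin> B"
  unfolding rej_bscc_states_def by blast

locale surrogate_chain =
  fixes P :: "'s::finite \<Rightarrow> 's \<Rightarrow> real" and B :: "'s set" and gB g :: real
  assumes stochastic: "stochastic P"
    and gB_pos: "0 < gB" and gB_less: "gB < g" and g_le_1: "g \<le> 1"
begin

abbreviation "U \<equiv> U_iter P B gB g"
abbreviation "V \<equiv> value_fun P B gB g"
abbreviation "\<Gamma> \<equiv> disc B gB g"

lemma disc_nonneg: "0 \<le> \<Gamma> s"
  using gB_pos gB_less by (simp add: disc_def)

lemma disc_le_g: "\<Gamma> s \<le> g"
  using gB_less by (simp add: disc_def)

lemma U_iter_bounds: "0 \<le> U k s \<and> U k s \<le> 1"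
proof (induction k arbitrary: s)
  case (Suc k)
  let ?avg = "\<Sum>t\<in>UNIV. P s t * U k t"
  have "0 \<le> ?avg" and "?avg \<le> 1"
    using Suc stochastic by (blast intro: stochastic_avg_nonneg stochastic_avg_le)+
  then have "0 \<le> \<Gamma> s * ?avg" and "\<Gamma> s * ?avg \<le> \<Gamma> s"
    using disc_nonneg by (auto simp: mult_left_le)
  moreover have "0 \<le> rew B gB s" and "rew B gB s + \<Gamma> s \<le> 1"
    using gB_pos gB_less g_le_1 by (auto simp: rew_def disc_def)
  ultimately show ?case by simp
qed simp

lemma U_iter_incseq: "incseq (\<lambda>k. U k s)"
proof -
  have "U k s \<le> U (Suc k) s" for k s
  proof (induction k arbitrary: s)
    case 0
    then show ?case using U_iter_bounds[of 1 s] by simp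
  next
    case (Suc k)
    have "(\<Sum>t\<in>UNIV. P s t * U k t) \<le> (\<Sum>t\<in>UNIV. P s t * U (Suc k) t)"
      by (intro sum_mono mult_left_mono Suc stochastic_nonneg stochastic)
    then show ?case by (simp add: mult_left_mono[OF _ disc_nonneg])
  qed
  then show ?thesis by (simp add: incseq_SucI)
qed

lemma U_iter_tendsto_value: "(\<lambda>k. U k s) \<longlonglongrightarrow> V s"
proof -
  have "\<forall>k. U k s \<le> 1" using U_iter_bounds by blast
  then obtain L where L: "(\<lambda>k. U k s) \<longlonglongrightarrow> L"
    using incseq_convergent[OF U_iter_incseq] by blast
  then have "(\<lambda>K. exp_ret_trunc P B gB g K s) \<longlonglongrightarrow> L"
    unfolding exp_ret_trunc_eq_U_iter[OF stochastic] by (rule LIMSEQ_Suc)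
  then have "V s = L" unfolding value_fun_def by (rule limI)
  with L show ?thesis by simp
qed

lemma U_iter_le_value: "U k s \<le> V s"
  using U_iter_incseq U_iter_tendsto_value by (rule incseq_le)

lemma value_fixpoint: "V s = rew B gB s + \<Gamma> s * (\<Sum>t\<in>UNIV. P s t * V t)"
proof (rule LIMSEQ_unique)
  show "(\<lambda>k. U (Suc k) s) \<longlonglongrightarrow> V s"
    using LIMSEQ_Suc[OF U_iter_tendsto_value] .
  show "(\<lambda>k. U (Suc k) s) \<longlonglongrightarrow> rew B gB s + \<Gamma> s * (\<Sum>t\<in>UNIV. P s t * V t)"
    unfolding U_iter.simps by (intro tendsto_intros U_iter_tendsto_value)
qed

lemma error_Suc: "V s - U (Suc k) s = \<Gamma> s * (\<Sum>t\<in>UNIV. P s t * (V t - U k t))"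
  by (subst value_fixpoint) (simp add: right_diff_distrib sum_subtractf)

lemma error_antimono: "k \<le> k' \<Longrightarrow> V s - U k' s \<le> V s - U k s"
  using U_iter_incseq by (simp add: incseq_def)

lemma sup_norm_error_le: "(\<And>s. V s - U k s \<le> X) \<Longrightarrow> sup_norm (\<lambda>s. U k s - V s) \<le> X"
  by (intro sup_norm_le) (metis U_iter_le_value abs_of_nonneg abs_minus_commute diff_ge_0_iff_ge)

lemma error_geometric: "sup_norm (\<lambda>s. U k s - V s) \<le> g ^ k * sup_norm V"
proof (rule sup_norm_error_le)
  fix s
  show "V s - U k s \<le> g ^ k * sup_norm V"
  proof (induction k arbitrary: s)
    case 0
    show ?case using abs_le_sup_norm[of V s] by simp
  next
    case (Suc k)
    let ?avg = "\<Sum>t\<in>UNIV. P s t * (V t - U k t)"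
    have "0 \<le> ?avg"
      using U_iter_le_value by (intro stochastic_avg_nonneg stochastic) simp
    then have "V s - U (Suc k) s \<le> g * ?avg"
      unfolding error_Suc by (intro mult_right_mono disc_le_g)
    also have "\<dots> \<le> g * (g ^ k * sup_norm V)"
      using Suc gB_pos gB_less by (intro mult_left_mono stochastic_avg_le stochastic) auto
    finally show ?case by simp
  qed
qed

lemma U_iter_rej_bscc: "s \<in> rej_bscc_states P B \<Longrightarrow> U k s = 0"
proof (induction k arbitrary: s)
  case (Suc k)
  have "P s t * U k t = 0" for t
    using Suc rej_bscc_states_closed[OF Suc.prems, of t] stochastic_nonneg[OF stochastic, of s t]
    by force
  then show ?case
    using rej_bscc_states_not_accepting[OF Suc.prems] by (simp add: rew_def del: mult_eq_0_iff)
qed simp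

lemma value_rej_bscc: "s \<in> rej_bscc_states P B \<Longrightarrow> V s = 0"
  using U_iter_tendsto_value[of s] by (simp add: U_iter_rej_bscc LIMSEQ_const_iff)

lemma subsolution_accepting:
  assumes sub: "x \<le> \<Gamma> s * (\<Sum>t\<in>UNIV. P s t * y t)"
    and bounds: "\<And>t. 0 \<le> y t \<and> y t \<le> M" and "s \<in> B"
  shows "x \<le> gB * M"
proof -
  have "(\<Sum>t\<in>UNIV. P s t * y t) \<le> M"
    using bounds by (blast intro: stochastic_avg_le stochastic)
  then show ?thesis
    using sub \<open>s \<in> B\<close> gB_pos by (simp add: disc_def) (meson mult_left_mono order_trans less_imp_le)
qed

lemma subsolution_through_edge:
  assumes sub: "x \<le> \<Gamma> s * (\<Sum>u\<in>UNIV. P s u * y u)"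
    and bounds: "\<And>u. 0 \<le> y u \<and> y u \<le> M"
    and "y t \<le> M - d" and "0 \<le> d" and "\<epsilon> \<le> P s t"
  shows "x \<le> M - \<epsilon> * d"
proof -
  have "0 \<le> (\<Sum>u\<in>UNIV. P s u * y u)"
    using bounds by (blast intro: stochastic_avg_nonneg stochastic)
  then have "x \<le> (\<Sum>u\<in>UNIV. P s u * y u)"
    using sub disc_nonneg[of s] disc_le_g[of s] g_le_1
    by (meson mult_left_le_one_le order_trans)
  also have "\<dots> \<le> M - \<epsilon> * d"
    using bounds assms(3-5) by (intro stochastic_avg_le_dip stochastic) auto
  finally show ?thesis .
qed

lemma subsolution_decay:
  fixes y :: "nat \<Rightarrow> 's \<Rightarrow> real"
  assumes eps: "0 < \<epsilon>" and min_prob: "\<forall>s t. 0 < P s t \<longrightarrow> \<epsilon> \<le> P s t"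
    and sub: "\<And>i s. y (Suc i) s \<le> \<Gamma> s * (\<Sum>t\<in>UNIV. P s t * y i t)"
    and bounds: "\<And>i s. 0 \<le> y i s \<and> y i s \<le> M"
    and rej: "\<And>i s. s \<in> rej_bscc_states P B \<Longrightarrow> y i s = 0"
    and reach: "s \<in> can_reach_within P (B \<union> rej_bscc_states P B) j" and "j \<le> m"
  shows "y (Suc m) s \<le> (1 - (1 - gB) * \<epsilon> ^ j) * M"
proof -
  let ?G = "can_reach_within P (B \<union> rej_bscc_states P B)"
  have M_nonneg: "0 \<le> M"
    using bounds by (meson order_trans)
  have "\<epsilon> \<le> 1"
    using stochastic min_prob by (rule stochastic_min_positive_le_1)
  have "gB < 1"
    using gB_less g_le_1 by simp
  show ?thesis
    using reach \<open>j \<le> m\<close>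
  proof (induction j arbitrary: s m)
    case 0
    then consider "s \<in> B" | "s \<in> rej_bscc_states P B" by auto
    then show ?case
    proof cases
      case 1
      then show ?thesis using subsolution_accepting[OF sub bounds] by simp
    next
      case 2
      then show ?thesis using rej M_nonneg gB_pos by simp
    qed
  next
    case (Suc j)
    show ?case
    proof (cases "s \<in> ?G j")
      case True
      have "\<epsilon> ^ Suc j \<le> \<epsilon> ^ j"
        using eps \<open>\<epsilon> \<le> 1\<close> by (simp add: mult_left_le_one_le)
      then have "(1 - (1 - gB) * \<epsilon> ^ j) * M \<le> (1 - (1 - gB) * \<epsilon> ^ Suc j) * M"
        using \<open>gB < 1\<close> M_nonneg by (intro mult_right_mono) (simp_all add: mult_left_mono)
      moreover have "y (Suc m) s \<le> (1 - (1 - gB) * \<epsilon> ^ j) * M"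
        using Suc.IH[OF True] Suc.prems(2) by simp
      ultimately show ?thesis by linarith
    next
      case False
      then obtain t where t: "t \<in> ?G j" and "0 < P s t"
        using Suc.prems(1) by auto
      obtain m' where m: "m = Suc m'" and "j \<le> m'"
        using Suc.prems(2) by (cases m) auto
      define a where "a = (1 - gB) * \<epsilon> ^ j"
      have "y m t \<le> M - a * M"
        using Suc.IH[OF t \<open>j \<le> m'\<close>] m by (simp add: a_def algebra_simps)
      moreover have "0 \<le> a * M"
        using \<open>gB < 1\<close> eps M_nonneg by (simp add: a_def)
      moreover have "\<epsilon> \<le> P s t"
        using \<open>0 < P s t\<close> min_prob by blast
      ultimately have "y (Suc m) s \<le> M - \<epsilon> * (a * M)"
        using sub bounds by (blast intro: subsolution_through_edge)
      then show ?thesis by (simp add: a_def algebra_simps)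
    qed
  qed
qed

lemma error_block_contraction:
  assumes "0 < \<epsilon>" and "\<forall>s t. 0 < P s t \<longrightarrow> \<epsilon> \<le> P s t"
    and bound: "\<And>s. V s - U k s \<le> M"
  shows "V s - U (k + Suc (card (notB_TA P B))) s
    \<le> (1 - (1 - gB) * \<epsilon> ^ card (notB_TA P B)) * M"
proof -
  let ?n = "card (notB_TA P B)"
  define y where "y i s = V s - U (k + i) s" for i s
  have "y (Suc ?n) s \<le> (1 - (1 - gB) * \<epsilon> ^ ?n) * M"
  proof (rule subsolution_decay[OF assms(1,2)])
    show "y (Suc i) s \<le> \<Gamma> s * (\<Sum>t\<in>UNIV. P s t * y i t)" for i s
      unfolding y_def add_Suc_right error_Suc ..
    show "0 \<le> y i s \<and> y i s \<le> M" for i s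
      unfolding y_def using U_iter_le_value error_antimono[of k "k + i" s] bound[of s]
      by (simp add: add_increasing2)
    show "y i s = 0" if "s \<in> rej_bscc_states P B" for i s
      unfolding y_def using that by (simp add: U_iter_rej_bscc value_rej_bscc)
    show "s \<in> can_reach_within P (B \<union> rej_bscc_states P B) ?n"
      by (simp add: can_reach_accepting_or_rej_bscc)
  qed simp
  then show ?thesis by (simp add: y_def)
qed

lemma error_bound_min_prob:
  assumes "0 < \<epsilon>" and "\<forall>s t. 0 < P s t \<longrightarrow> \<epsilon> \<le> P s t"
  shows "sup_norm (\<lambda>s. U k s - V s)
    \<le> (1 - (1 - gB) * \<epsilon> ^ card (notB_TA P B)) ^ (k div Suc (card (notB_TA P B))) * sup_norm V"
proof (rule sup_norm_error_le)
  let ?n = "card (notB_TA P B)" and ?c = "1 - (1 - gB) * \<epsilon> ^ card (notB_TA P B)"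
  have blocks: "V s - U (q * Suc ?n) s \<le> ?c ^ q * sup_norm V" for q s
  proof (induction q arbitrary: s)
    case 0
    show ?case using abs_le_sup_norm[of V s] by simp
  next
    case (Suc q)
    have "Suc q * Suc ?n = q * Suc ?n + Suc ?n" by simp
    then show ?case
      unfolding power_Suc mult.assoc by (metis error_block_contraction[OF assms Suc.IH])
  qed
  fix s
  have "k div Suc ?n * Suc ?n \<le> k" by (rule div_times_less_eq_dividend)
  then show "V s - U k s \<le> ?c ^ (k div Suc ?n) * sup_norm V"
    using blocks error_antimono order_trans by blast
qed

end

theorem theorem1:
  fixes P :: "'s::finite \<Rightarrow> 's \<Rightarrow> real" and B :: "'s set" and gB g :: real
  assumes "stochastic P"
    and "0 < gB" and "gB < g" and "g \<le> 1"
  shows "(\<forall>s. (\<lambda>k. U_iter P B gB g k s) \<longlonglongrightarrow> value_fun P B gB g s)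
    \<and> (g < 1 \<longrightarrow> (\<forall>k. sup_norm (\<lambda>s. U_iter P B gB g k s - value_fun P B gB g s)
                         \<le> g ^ k * sup_norm (value_fun P B gB g)))
    \<and> (g = 1 \<longrightarrow> (\<forall>\<epsilon>::real. \<epsilon> > 0 \<longrightarrow> (\<forall>s s'. P s s' > 0 \<longrightarrow> P s s' \<ge> \<epsilon>) \<longrightarrow>
         (\<forall>k. sup_norm (\<lambda>s. U_iter P B gB g k s - value_fun P B gB g s)
              \<le> (1 - (1 - gB) * \<epsilon> ^ card (notB_TA P B)) ^ (k div (card (notB_TA P B) + 1))
                 * sup_norm (value_fun P B gB g))))"
proof -
  interpret surrogate_chain P B gB g
    using assms by unfold_locales
  show ?thesis
    using U_iter_tendsto_value error_geometric error_bound_min_prob by auto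
qed

end
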